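(* Consider a spacecraft moving on a hyperbolic flyby trajectory past the earth under Newtonian gravity plus the small perturbing force (per unit mass) \[ F = 2\omega_\oplus R_\oplus \left[ \frac{2GM_\oplus}{r^2} \cos \delta ~\hat{e}_r + \frac{v^2}{r} \sin \delta ~\hat{e}_\delta \right]. \] Then, to leading order in the perturbation, the differential $\Delta v_\infty$ between the outgoing asymptotic speed $v_1$ and the incoming asymptotic speed $v_0$ satisfies \[ \frac{\Delta v_\infty}{v_\infty} = 2 \omega_\oplus R_\oplus \left( \cos \delta_0 - \cos \delta_1 \right). \]
   Context: Units with $c=1$. Spherical coordinates centered on the earth: radius $r$, declination $\delta$ (measured from the equatorial plane), azimuth $\phi$; $\hat{e}_r$, $\hat{e}_\delta$ are the orthonormal radial and declination unit vectors. $\omega_\oplus$ is the earth's rotational angular velocity, $R_\oplus$ its radius, $M_\oplus$ its mass, $G$ Newton's constant. $v$ denotes the spacecraft's speed and $\mathbf{v}$ its velocity; $v_\infty$ its asymptotic speed. $\delta_0$ and $\delta_1$ are the declinations of the planes (through the spacecraft and the earth's center of mass) containing the incoming resp. outgoing asymptotic velocity vectors. The energy per unit mass $E = \frac{1}{2}v^2 - \frac{GM_\oplus}{r}$ is approximately conserved, and $\Delta v_\infty/v_\infty = \Delta E/(2E)$ with $\Delta E = \int_{-\infty}^{\infty} \mathbf{F}\cdot\mathbf{v}\,dt$. This force law is the paper's derived post-Einsteinian correction (from an inertial frame dragging linear in the earth's rotational velocity) after dropping terms shown not to contribute; the resulting formula is Anderson et al.'s semi-empirical flyby-anomaly prediction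 formula. *)

theory Defs
  imports "HOL-Analysis.Analysis"
begin

text \<open>Earth-centred spherical coordinates: radius r, declination d (angle from the
  equatorial plane), azimuth ph. Points of space are vectors in real^3.\<close>

definition sph_pos :: "real \<Rightarrow> real \<Rightarrow> real \<Rightarrow> real^3" where
  "sph_pos r d ph = vector [r * cos d * cos ph, r * cos d * sin ph, r * sin d]"

definition e_rad :: "real \<Rightarrow> real \<Rightarrow> real^3" where
  "e_rad d ph = vector [cos d * cos ph, cos d * sin ph, sin d]"

definition e_decl :: "real \<Rightarrow> real \<Rightarrow> real^3" where
  "e_decl d ph = vector [- sin d * cos ph, - sin d * sin ph, cos d]"

definition flyby_force ::
  "real \<Rightarrow> real \<Rightarrow> real \<Rightarrow> real \<Rightarrow> real \<Rightarrow> real \<Rightarrow> real \<Rightarrow> real \<Rightarrow> real^3" where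
  "flyby_force w R G M r d ph s =
     (2 * w * R) *\<^sub>R ((2 * G * M / r^2 * cos d) *\<^sub>R e_rad d ph
                       + (s^2 / r * sin d) *\<^sub>R e_decl d ph)"

end

theory Submission
  imports Defs
begin

(* On a Kepler orbit energy conservation gives |v|^2 = 2E + 2GM/r, hence d|v|^2/dt = -2GM r'/r^2.
   Since e_r.v = r' and e_delta.v = r delta', the power of the force is
   F.v = 2 w R (2GM cos(delta) r'/r^2 + |v|^2 sin(delta) delta'), which is therefore the exact
   time derivative of -2 w R |v|^2 cos(delta).  The energy gained between times a and b
   telescopes, and for a -> -inf, b -> +inf, where r -> inf and |v|^2 -> 2E, it tends to
   4 w R E (cos delta0 - cos delta1). *)

lemma has_real_derivative_norm:
  fixes x :: "real \<Rightarrow> 'a::real_inner"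
  assumes "x t \<noteq> 0" and "(x has_vector_derivative v) (at t)"
  shows "((\<lambda>t. norm (x t)) has_real_derivative inner (x t) v / norm (x t)) (at t)"
proof -
  have "((\<lambda>t. norm (x t)) has_derivative (\<lambda>h. (h *\<^sub>R v) \<bullet> sgn (x t))) (at t)"
    using has_derivative_compose[OF assms(2)[unfolded has_vector_derivative_def]
        has_derivative_norm[OF assms(1)]] by (simp add: o_def)
  then show ?thesis
    unfolding has_field_derivative_def
    by (rule has_derivative_eq_rhs)
      (simp add: fun_eq_iff sgn_div_norm inner_commute divide_inverse mult_ac)
qed

lemma has_real_derivative_inner_self:
  fixes v :: "real \<Rightarrow> 'a::real_inner"
  assumes "(v has_vector_derivative a) (at t)"
  shows "((\<lambda>t. inner (v t) (v t)) has_real_derivative 2 * inner (v t) a) (at t)"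
proof -
  note v' = assms[unfolded has_vector_derivative_def]
  have "((\<lambda>t. inner (v t) (v t)) has_derivative
      (\<lambda>h. v t \<bullet> (h *\<^sub>R a) + (h *\<^sub>R a) \<bullet> v t)) (at t)"
    by (rule has_derivative_inner[OF v' v'])
  then show ?thesis
    unfolding has_field_derivative_def
    by (rule has_derivative_eq_rhs) (simp add: fun_eq_iff inner_commute)
qed

lemma kepler_energy_constant:
  fixes x v :: "real \<Rightarrow> 'a::real_inner"
  assumes nonzero: "\<And>t. x t \<noteq> 0"
    and vel: "\<And>t. (x has_vector_derivative v t) (at t)"
    and acc: "\<And>t. (v has_vector_derivative (- (k / norm (x t) ^ 3)) *\<^sub>R x t) (at t)"
  shows "norm (v t)^2 / 2 - k / norm (x t) = norm (v s)^2 / 2 - k / norm (x s)"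
proof -
  let ?H = "\<lambda>t. inner (v t) (v t) / 2 - k / norm (x t)"
  have "(?H has_real_derivative 0) (at t)" for t
  proof -
    have "(?H has_real_derivative 2 * inner (v t) (- (k / norm (x t) ^ 3) *\<^sub>R x t) / 2
        + k * (inner (x t) (v t) / norm (x t)) / norm (x t)^2) (at t)"
      using nonzero[of t]
      by (auto intro!: derivative_eq_intros has_real_derivative_inner_self acc
          has_real_derivative_norm vel simp: power2_eq_square)
    then show ?thesis
      using nonzero[of t] by (simp add: inner_commute field_simps power3_eq_cube power2_eq_square)
  qed
  then show ?thesis
    using DERIV_isconst_all[of ?H] unfolding power2_norm_eq_inner by blast
qed

definition e_azim :: "real \<Rightarrow> real^3" where
  "e_azim ph = vector [- sin ph, cos ph, 0]"

lemma inner_sph_frame [simp]: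
  "e_rad d ph \<bullet> e_rad d ph = 1"
  "e_decl d ph \<bullet> e_decl d ph = 1"
  "e_rad d ph \<bullet> e_decl d ph = 0"
  "e_rad d ph \<bullet> e_azim ph = 0"
  "e_decl d ph \<bullet> e_azim ph = 0"
proof -
  have "sin d^2 + cos d^2 = 1" "sin ph^2 + cos ph^2 = 1" by simp_all
  then show "e_rad d ph \<bullet> e_rad d ph = 1" "e_decl d ph \<bullet> e_decl d ph = 1"
    "e_rad d ph \<bullet> e_decl d ph = 0" "e_rad d ph \<bullet> e_azim ph = 0" "e_decl d ph \<bullet> e_azim ph = 0"
    unfolding e_rad_def e_decl_def e_azim_def inner_vec_def sum_3 vector_3 inner_real_def
    by algebra+
qed

lemma sph_pos_eq_scaleR_e_rad: "sph_pos r d ph = r *\<^sub>R e_rad d ph"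
  by (simp add: sph_pos_def e_rad_def vec_eq_iff forall_3 vector_3)

lemma norm_sph_pos: "norm (sph_pos r d ph) = \<bar>r\<bar>"
  by (simp add: sph_pos_eq_scaleR_e_rad norm_eq_sqrt_inner)

lemma sph_kepler_energy_constant:
  assumes r_pos: "\<And>t. r t > 0"
    and vel: "\<And>t. ((\<lambda>t. sph_pos (r t) (d t) (ph t)) has_vector_derivative v t) (at t)"
    and newton: "\<And>t. (v has_vector_derivative
                    (- (k / (r t)^3)) *\<^sub>R sph_pos (r t) (d t) (ph t)) (at t)"
  shows "norm (v t)^2 / 2 - k / r t = norm (v s)^2 / 2 - k / r s"
proof -
  have norm_pos: "norm (sph_pos (r t) (d t) (ph t)) = r t" for t
    using r_pos[of t] by (simp add: norm_sph_pos)
  have "sph_pos (r t) (d t) (ph t) \<noteq> 0" for t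
    using norm_pos[of t] r_pos[of t] by auto
  from kepler_energy_constant[OF this vel] show ?thesis
    using newton by (simp add: norm_pos)
qed

lemma has_vector_derivative_vec_nth:
  fixes f :: "real \<Rightarrow> real^'n"
  assumes "(f has_vector_derivative D) F"
  shows "((\<lambda>t. f t $ i) has_real_derivative D $ i) F"
  using bounded_linear.has_vector_derivative[OF bounded_linear_vec_nth assms]
  by (simp add: has_real_derivative_iff_has_vector_derivative)

lemma sph_velocity:
  assumes vel: "((\<lambda>t. sph_pos (r t) (d t) (ph t)) has_vector_derivative v) (at t)"
    and r': "(r has_real_derivative r') (at t)"
    and d': "(d has_real_derivative d') (at t)"
    and ph': "(ph has_real_derivative p') (at t)"
  shows "v = r' *\<^sub>R e_rad (d t) (ph t) + (r t * d') *\<^sub>R e_decl (d t) (ph t)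
           + (r t * cos (d t) * p') *\<^sub>R e_azim (ph t)"
proof -
  let ?w = "r' *\<^sub>R e_rad (d t) (ph t) + (r t * d') *\<^sub>R e_decl (d t) (ph t)
           + (r t * cos (d t) * p') *\<^sub>R e_azim (ph t)"
  have "((\<lambda>t. sph_pos (r t) (d t) (ph t) $ i) has_real_derivative ?w $ i) (at t)" for i
    unfolding sph_pos_def e_rad_def e_decl_def e_azim_def
    using exhaust_3[of i]
    by (auto intro!: derivative_eq_intros r' d' ph' simp: algebra_simps)
  then show ?thesis
    by (auto simp: vec_eq_iff intro: DERIV_unique has_vector_derivative_vec_nth[OF vel])
qed

lemma flyby_force_inner_velocity:
  assumes "r \<noteq> 0"
  shows "flyby_force w R G M r d ph s \<bullet>
           (r' *\<^sub>R e_rad d ph + (r * d') *\<^sub>R e_decl d ph + q *\<^sub>R e_azim ph)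
         = 2 * w * R * (2 * G * M / r^2 * cos d * r' + s^2 * sin d * d')"
  using assms
  by (simp add: flyby_force_def inner_add inner_commute[of "e_decl d ph" "e_rad d ph"]
      field_simps power2_eq_square)

lemma flyby_power_eq_derivative:
  assumes r_pos: "r t > 0"
    and vel: "((\<lambda>t. sph_pos (r t) (d t) (ph t)) has_vector_derivative v) (at t)"
    and r': "(r has_real_derivative r') (at t)"
    and d': "(d has_real_derivative d') (at t)"
    and ph': "(ph has_real_derivative p') (at t)"
    and speed: "norm v ^ 2 = c + 2 * G * M / r t"
  shows "((\<lambda>t. - 2 * w * R * (c + 2 * G * M / r t) * cos (d t)) has_real_derivative
           flyby_force w R G M (r t) (d t) (ph t) (norm v) \<bullet> v) (at t)"
proof -
  have "flyby_force w R G M (r t) (d t) (ph t) (norm v) \<bullet> v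
      = 2 * w * R * (2 * G * M / (r t)^2 * cos (d t) * r' + norm v ^ 2 * sin (d t) * d')"
    using r_pos by (simp add: sph_velocity[OF vel r' d' ph'] flyby_force_inner_velocity)
  also have "\<dots> = 2 * w * R * (2 * G * M / (r t)^2 * cos (d t) * r'
                                + (c + 2 * G * M / r t) * sin (d t) * d')"
    by (simp add: speed)
  finally show ?thesis
    using r_pos by (auto intro!: derivative_eq_intros r' d' simp: field_simps power2_eq_square)
qed

lemma tendsto_flyby_potential:
  fixes r d :: "'a \<Rightarrow> real" and w R c G M \<delta> :: real
  assumes "filterlim r at_top F" and "(d \<longlongrightarrow> \<delta>) F"
  shows "((\<lambda>t. - 2 * w * R * (c + 2 * G * M / r t) * cos (d t))
           \<longlongrightarrow> - 2 * w * R * c * cos \<delta>) F"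
proof -
  have "((\<lambda>t. 2 * G * M / r t) \<longlongrightarrow> 0) F"
    by (rule tendsto_divide_0[OF tendsto_const filterlim_at_top_imp_at_infinity[OF assms(1)]])
  moreover have "((\<lambda>t. cos (d t)) \<longlongrightarrow> cos \<delta>) F"
    by (rule isCont_tendsto_compose[OF isCont_cos assms(2)])
  ultimately have "((\<lambda>t. - 2 * w * R * (c + 2 * G * M / r t) * cos (d t))
      \<longlongrightarrow> - 2 * w * R * (c + 0) * cos \<delta>) F"
    by (intro tendsto_intros)
  then show ?thesis
    by simp
qed

lemma tendsto_integral_at_bot_at_top:
  fixes f \<Phi> :: "real \<Rightarrow> 'a::banach"
  assumes deriv: "\<And>t. (\<Phi> has_vector_derivative f t) (at t)"
    and "(\<Phi> \<longlongrightarrow> A) at_bot" and "(\<Phi> \<longlongrightarrow> B) at_top"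
  shows "((\<lambda>(a, b). integral {a..b} f) \<longlongrightarrow> B - A) (at_bot \<times>\<^sub>F at_top)"
proof -
  have "\<forall>\<^sub>F x in at_bot \<times>\<^sub>F at_top. fst x \<le> (0::real) \<and> (0::real) \<le> snd x"
    by (rule eventually_prodI[OF eventually_le_at_bot eventually_ge_at_top])
  then have "\<forall>\<^sub>F x in at_bot \<times>\<^sub>F at_top.
      \<Phi> (snd x) - \<Phi> (fst x) = (\<lambda>(a, b). integral {a..b} f) x"
  proof (rule eventually_mono, clarsimp)
    fix a b :: real assume "a \<le> 0" "0 \<le> b"
    then have "(f has_integral \<Phi> b - \<Phi> a) {a..b}"
      by (intro fundamental_theorem_of_calculus) (auto intro: has_vector_derivative_at_within deriv)
    then show "\<Phi> b - \<Phi> a = integral {a..b} f"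
      by (simp add: integral_unique)
  qed
  moreover have "((\<lambda>x. \<Phi> (snd x) - \<Phi> (fst x)) \<longlongrightarrow> B - A) (at_bot \<times>\<^sub>F at_top)"
    using assms(2,3)
    by (intro tendsto_diff filterlim_compose[OF _ filterlim_fst] filterlim_compose[OF _ filterlim_snd])
  ultimately show ?thesis
    by (rule Lim_transform_eventually[rotated])
qed

theorem proposition3p1:
  fixes w R G M E d0 d1 :: real
    and r d ph :: "real \<Rightarrow> real"
    and v acc :: "real \<Rightarrow> real^3"
  assumes G_pos: "G > 0" and M_pos: "M > 0"
    and r_pos: "\<And>t. r t > 0"
    and r_diff: "\<And>t. r differentiable (at t)"
    and d_diff: "\<And>t. d differentiable (at t)"
    and ph_diff: "\<And>t. ph differentiable (at t)"
    and vel: "\<And>t. ((\<lambda>t. sph_pos (r t) (d t) (ph t)) has_vector_derivative v t) (at t)"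
    and newton: "\<And>t. (v has_vector_derivative (- (G * M / (r t)^3)) *\<^sub>R sph_pos (r t) (d t) (ph t)) (at t)"
    and energy: "E = (norm (v 0))^2 / 2 - G * M / r 0"
    and hyperbolic: "E > 0"
    and r_inf_in: "filterlim r at_top at_bot"
    and r_inf_out: "filterlim r at_top at_top"
    and decl_in: "(d \<longlongrightarrow> d0) at_bot"
    and decl_out: "(d \<longlongrightarrow> d1) at_top"
  shows "((\<lambda>(a, b). integral {a..b}
             (\<lambda>t. flyby_force w R G M (r t) (d t) (ph t) (norm (v t)) \<bullet> v t) / (2 * E))
           \<longlongrightarrow> 2 * w * R * (cos d0 - cos d1)) (at_bot \<times>\<^sub>F at_top)"
proof -
  have D: "(r has_real_derivative deriv r t) (at t)" "(d has_real_derivative deriv d t) (at t)"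
    "(ph has_real_derivative deriv ph t) (at t)" for t
    using r_diff d_diff ph_diff by (simp_all add: DERIV_deriv_iff_real_differentiable)
  have "norm (v t)^2 / 2 - G * M / r t = E" for t
    using sph_kepler_energy_constant[OF r_pos vel newton, of t 0] energy by simp
  then have speed: "norm (v t)^2 = 2 * E + 2 * G * M / r t" for t
    by (simp add: field_simps)
  define \<Phi> where "\<Phi> t = - 2 * w * R * (2 * E + 2 * G * M / r t) * cos (d t)" for t
  have "(\<Phi> has_vector_derivative flyby_force w R G M (r t) (d t) (ph t) (norm (v t)) \<bullet> v t) (at t)"
    for t
    unfolding \<Phi>_def has_real_derivative_iff_has_vector_derivative[symmetric]
    by (rule flyby_power_eq_derivative[OF r_pos vel D speed])
  moreover have "(\<Phi> \<longlongrightarrow> - 2 * w * R * (2 * E) * cos d0) at_bot"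
    "(\<Phi> \<longlongrightarrow> - 2 * w * R * (2 * E) * cos d1) at_top"
    unfolding \<Phi>_def by (intro tendsto_flyby_potential r_inf_in decl_in r_inf_out decl_out)+
  ultimately have "((\<lambda>x. integral {fst x..snd x}
             (\<lambda>t. flyby_force w R G M (r t) (d t) (ph t) (norm (v t)) \<bullet> v t) / (2 * E))
           \<longlongrightarrow> (- 2 * w * R * (2 * E) * cos d1 - - 2 * w * R * (2 * E) * cos d0) / (2 * E))
         (at_bot \<times>\<^sub>F at_top)"
    using hyperbolic
    by (intro tendsto_divide tendsto_const tendsto_integral_at_bot_at_top[unfolded case_prod_unfold])
      auto
  moreover have "(- 2 * w * R * (2 * E) * cos d1 - - 2 * w * R * (2 * E) * cos d0) / (2 * E)
      = 2 * w * R * (cos d0 - cos d1)"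
    using hyperbolic by (simp add: field_simps)
  ultimately show ?thesis
    by (simp add: case_prod_unfold)
qed

end
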